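(* For any formula $A$, the contraction rules $\mathsf{cl}_A$: from $\Gamma,A,A\Rightarrow\Delta$ infer $\Gamma,A\Rightarrow\Delta$, and $\mathsf{cr}_A$: from $\Gamma\Rightarrow A,A,\Delta$ infer $\Gamma\Rightarrow A,\Delta$ (for arbitrary finite multisets $\Gamma,\Delta$) are admissible in $\mathsf{Grz}_\infty$; that is, whenever the premise is provable in $\mathsf{Grz}_\infty$, so is the conclusion.
   Context: Formulas are built from $\bot$ and atomic propositions using $\to$ and $\Box$. A sequent is $\Gamma\Rightarrow\Delta$ with $\Gamma,\Delta$ finite multisets of formulas; $\Box\Pi$ denotes the multiset $\{\Box B:B\in\Pi\}$. The calculus $\mathsf{Grz}_\infty$ (without cut) has initial sequents $\Gamma,p\Rightarrow p,\Delta$ ($p$ atomic) and $\Gamma,\bot\Rightarrow\Delta$, and rules: $(\to_L)$ from $\Gamma,B\Rightarrow\Delta$ and $\Gamma\Rightarrow A,\Delta$ infer $\Gamma,A\to B\Rightarrow\Delta$; $(\to_R)$ from $\Gamma,A\Rightarrow B,\Delta$ infer $\Gamma\Rightarrow A\to B,\Delta$; $(\mathsf{refl})$ from $\Gamma,B,\Box B\Rightarrow\Delta$ infer $\Gamma,\Box B\Rightarrow\Delta$; $(\Box)$ from left premise $\Gamma,\Box\Pi\Rightarrow A,\Delta$ and right premise $\Box\Pi\Rightarrow A$ infer $\Gamma,\Box\Pi\Rightarrow\Box A,\Delta$. An $\infty$-proof is a possibly infinite tree of sequents built by these rules, with leaves labelled by initial sequents, in which every infinite branch passes through a right premise of $(\Box)$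 infinitely often; a sequent is provable if it labels the root of an $\infty$-proof. *)

theory Defs
  imports "HOL-Library.Multiset"
begin

datatype fm = Bot | At nat | Imp fm fm | Box fm

type_synonym sequent = "fm multiset \<times> fm multiset"

text \<open>Rule labels. For BoxR, child 0 is the left premise, child 1 the right premise.\<close>
datatype rl = Ax | ImpL | ImpR | Refl | BoxR

codatatype ptree = PNode (root: sequent) (rule: rl) (subs: "ptree list")

fun step_ok :: "sequent \<Rightarrow> rl \<Rightarrow> sequent list \<Rightarrow> bool" where
  "step_ok S Ax ps \<longleftrightarrow> ps = [] \<and>
     ((\<exists>\<Gamma> \<Delta> p. S = (add_mset (At p) \<Gamma>, add_mset (At p) \<Delta>)) \<or>
      (\<exists>\<Gamma> \<Delta>. S = (add_mset Bot \<Gamma>, \<Delta>)))"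
| "step_ok S ImpL ps \<longleftrightarrow> (\<exists>\<Gamma> \<Delta> A B. S = (add_mset (Imp A B) \<Gamma>, \<Delta>) \<and>
     ps = [(add_mset B \<Gamma>, \<Delta>), (\<Gamma>, add_mset A \<Delta>)])"
| "step_ok S ImpR ps \<longleftrightarrow> (\<exists>\<Gamma> \<Delta> A B. S = (\<Gamma>, add_mset (Imp A B) \<Delta>) \<and>
     ps = [(add_mset A \<Gamma>, add_mset B \<Delta>)])"
| "step_ok S Refl ps \<longleftrightarrow> (\<exists>\<Gamma> \<Delta> B. S = (add_mset (Box B) \<Gamma>, \<Delta>) \<and>
     ps = [(add_mset B (add_mset (Box B) \<Gamma>), \<Delta>)])"
| "step_ok S BoxR ps \<longleftrightarrow> (\<exists>\<Gamma> \<Pi> \<Delta> A. S = (\<Gamma> + image_mset Box \<Pi>, add_mset (Box A) \<Delta>) \<and>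
     ps = [(\<Gamma> + image_mset Box \<Pi>, add_mset A \<Delta>), (image_mset Box \<Pi>, {#A#})])"

coinductive locally_correct :: "ptree \<Rightarrow> bool" where
  "step_ok (root t) (rule t) (map root (subs t)) \<Longrightarrow>
   (\<forall>s \<in> set (subs t). locally_correct s) \<Longrightarrow> locally_correct t"

definition is_branch :: "ptree \<Rightarrow> (nat \<Rightarrow> ptree) \<Rightarrow> (nat \<Rightarrow> nat) \<Rightarrow> bool" where
  "is_branch t f d \<longleftrightarrow> f 0 = t \<and>
     (\<forall>i. d i < length (subs (f i)) \<and> f (Suc i) = subs (f i) ! d i)"

definition inf_proof :: "ptree \<Rightarrow> bool" where
  "inf_proof t \<longleftrightarrow> locally_correct t \<and>
     (\<forall>f d. is_branch t f d \<longrightarrow> (\<forall>n. \<exists>i\<ge>n. rule (f i) = BoxR \<and> d i = 1))"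

definition provable :: "sequent \<Rightarrow> bool" where
  "provable S \<longleftrightarrow> (\<exists>t. inf_proof t \<and> root t = S)"

end

theory Submission
  imports Defs
begin

text \<open>An \<open>\<infinity>\<close>-proof is the same as a finite derivation all of whose right premises of \<open>(\<Box>)\<close>
  are again \<open>\<infinity>\<close>-provable, so provability is the greatest fixed point of the operator sending
  \<open>X\<close> to the sequents finitely derivable from \<open>X\<close>-premises at the right of \<open>(\<Box>)\<close>.
  Contraction of \<open>A\<close> is proved by induction on \<open>A\<close>, using that within a finite derivation the
  rules for \<open>\<rightarrow>\<close> are invertible and \<open>(\<Box>)\<close> is invertible in its left premise. On the right,
  induct on the finite derivation: where a copy of \<open>A\<close> is principal, invert the other copy and
  contract the immediate subformulas. On the left the same works, except that a duplicated \<open>\<Box>B\<close>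
  may lie in the boxed context \<open>\<Box>\<Pi>\<close> of \<open>(\<Box>)\<close> and must then be contracted in its right
  premise, which is again a left contraction of \<open>\<Box>B\<close>; this circularity is resolved by
  coinduction.\<close>

inductive fin_deriv :: "(fm multiset \<Rightarrow> fm multiset \<Rightarrow> bool) \<Rightarrow> fm multiset \<Rightarrow> fm multiset \<Rightarrow> bool"
  for X where
  ax_at: "fin_deriv X (add_mset (At p) G) (add_mset (At p) D)"
| ax_bot: "fin_deriv X (add_mset Bot G) D"
| imp_L: "fin_deriv X (add_mset B G) D \<Longrightarrow> fin_deriv X G (add_mset A D)
    \<Longrightarrow> fin_deriv X (add_mset (Imp A B) G) D"
| imp_R: "fin_deriv X (add_mset A G) (add_mset B D) \<Longrightarrow> fin_deriv X G (add_mset (Imp A B) D)"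
| refl_L: "fin_deriv X (add_mset B (add_mset (Box B) G)) D \<Longrightarrow> fin_deriv X (add_mset (Box B) G) D"
| box_R: "fin_deriv X (G + image_mset Box P) (add_mset A D) \<Longrightarrow> X (image_mset Box P) {#A#}
     \<Longrightarrow> fin_deriv X (G + image_mset Box P) (add_mset (Box A) D)"

lemma fin_deriv_mono: "fin_deriv X G D \<Longrightarrow> (\<And>G D. X G D \<Longrightarrow> Y G D) \<Longrightarrow> fin_deriv Y G D"
  by (induction rule: fin_deriv.induct) (auto intro: fin_deriv.intros)

lemma fin_deriv_mono_le: "X \<le> Y \<Longrightarrow> fin_deriv X \<le> fin_deriv Y"
  by (intro le_funI le_boolI) (erule fin_deriv_mono, auto simp: le_fun_def)

coinductive coprovable :: "fm multiset \<Rightarrow> fm multiset \<Rightarrow> bool" where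
  "fin_deriv coprovable G D \<Longrightarrow> coprovable G D"
monos fin_deriv_mono_le

lemma coprovable_iff: "coprovable G D \<longleftrightarrow> fin_deriv coprovable G D"
  by (auto elim: coprovable.cases intro: coprovable.intros)

subsection \<open>Infinite proofs\<close>

lemma fin_deriv_of_step_ok:
  assumes step: "step_ok S r ps"
    and prems: "\<forall>i<length ps. (r = BoxR \<and> i = 1 \<longrightarrow> X (fst (ps!i)) (snd (ps!i))) \<and>
       (\<not> (r = BoxR \<and> i = 1) \<longrightarrow> fin_deriv X (fst (ps!i)) (snd (ps!i)))"
  shows "fin_deriv X (fst S) (snd S)"
proof (cases r)
  case Ax
  then have "(\<exists>\<Gamma> \<Delta> p. S = (add_mset (At p) \<Gamma>, add_mset (At p) \<Delta>))
    \<or> (\<exists>\<Gamma> \<Delta>. S = (add_mset Bot \<Gamma>, \<Delta>))"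
    using step by simp
  then show ?thesis by (auto intro: ax_at ax_bot)
next
  case ImpL
  then obtain \<Gamma> \<Delta> A B where S: "S = (add_mset (Imp A B) \<Gamma>, \<Delta>)"
    and ps: "ps = [(add_mset B \<Gamma>, \<Delta>), (\<Gamma>, add_mset A \<Delta>)]" using step by auto
  have a: "fin_deriv X (add_mset B \<Gamma>) \<Delta>" using prems[rule_format, of 0] ps ImpL by simp
  have b: "fin_deriv X \<Gamma> (add_mset A \<Delta>)" using prems[rule_format, of 1] ps ImpL by simp
  show ?thesis using imp_L[OF a b] S by simp
next
  case ImpR
  then obtain \<Gamma> \<Delta> A B where S: "S = (\<Gamma>, add_mset (Imp A B) \<Delta>)"
    and ps: "ps = [(add_mset A \<Gamma>, add_mset B \<Delta>)]" using step by auto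
  have a: "fin_deriv X (add_mset A \<Gamma>) (add_mset B \<Delta>)" using prems[rule_format, of 0] ps ImpR by simp
  show ?thesis using imp_R[OF a] S by simp
next
  case Refl
  then obtain \<Gamma> \<Delta> B where S: "S = (add_mset (Box B) \<Gamma>, \<Delta>)"
    and ps: "ps = [(add_mset B (add_mset (Box B) \<Gamma>), \<Delta>)]" using step by auto
  have a: "fin_deriv X (add_mset B (add_mset (Box B) \<Gamma>)) \<Delta>" using prems[rule_format, of 0] ps Refl by simp
  show ?thesis using refl_L[OF a] S by simp
next
  case BoxR
  then obtain \<Gamma> \<Pi> \<Delta> A where S: "S = (\<Gamma> + image_mset Box \<Pi>, add_mset (Box A) \<Delta>)"
    and ps: "ps = [(\<Gamma> + image_mset Box \<Pi>, add_mset A \<Delta>), (image_mset Box \<Pi>, {#A#})]" using step by auto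
  have a: "fin_deriv X (\<Gamma> + image_mset Box \<Pi>) (add_mset A \<Delta>)" using prems[rule_format, of 0] ps BoxR by simp
  have b: "X (image_mset Box \<Pi>) {#A#}" using prems[rule_format, of 1] ps BoxR by simp
  show ?thesis using box_R[OF a b] S by simp
qed

lemma is_branch_Cons:
  assumes "i < length (subs t)" and "is_branch (subs t ! i) f d"
  shows "is_branch t (case_nat t f) (case_nat i d)"
  using assms unfolding is_branch_def by (auto split: nat.split)

lemma inf_proof_subs:
  assumes t: "inf_proof t" and i: "i < length (subs t)"
  shows "inf_proof (subs t ! i)"
proof -
  have "locally_correct (subs t ! i)"
    using t i unfolding inf_proof_def by (auto elim: locally_correct.cases)
  moreover have "\<exists>j\<ge>n. rule (f j) = BoxR \<and> d j = 1" if branch: "is_branch (subs t ! i) f d" for f d n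
  proof -
    obtain j where "j \<ge> Suc n" "rule (case_nat t f j) = BoxR" "case_nat i d j = 1"
      using t is_branch_Cons[OF i branch] unfolding inf_proof_def by blast
    then show ?thesis by (cases j) auto
  qed
  ultimately show ?thesis unfolding inf_proof_def by blast
qed

lemma exists_branch_within:
  assumes "P t" and "\<And>s. P s \<Longrightarrow> \<exists>i<length (subs s). Q s i \<and> P (subs s ! i)"
  shows "\<exists>f d. is_branch t f d \<and> (\<forall>k. Q (f k) (d k))"
proof -
  define next_index where "next_index s = (SOME i. i < length (subs s) \<and> Q s i \<and> P (subs s ! i))" for s
  have next_index: "next_index s < length (subs s) \<and> Q s (next_index s) \<and> P (subs s ! next_index s)"
    if "P s" for s
    unfolding next_index_def using someI_ex[OF assms(2)[OF that]] by blast
  define f where "f = rec_nat t (\<lambda>_ s. subs s ! next_index s)"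
  have f_0: "f 0 = t" and f_Suc: "f (Suc k) = subs (f k) ! next_index (f k)" for k
    unfolding f_def by simp_all
  have P: "P (f k)" for k
    by (induction k) (use assms(1) f_0 f_Suc next_index in auto)
  have "is_branch t f (\<lambda>k. next_index (f k))"
    unfolding is_branch_def using f_0 f_Suc next_index P by blast
  moreover have "\<forall>k. Q (f k) (next_index (f k))" using next_index P by blast
  ultimately show ?thesis by blast
qed

text \<open>Every path of an \<open>\<infinity>\<close>-proof avoiding right premises of \<open>(\<Box>)\<close> is finite, so the part
  above the root up to such premises is a finite derivation.\<close>

lemma fin_deriv_of_inf_proof:
  assumes "inf_proof t"
  shows "fin_deriv (\<lambda>G D. provable (G, D)) (fst (root t)) (snd (root t))"
proof (rule ccontr)
  let ?Y = "\<lambda>G D. provable (G, D)"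
  define bad where "bad s \<longleftrightarrow> inf_proof s \<and> \<not> fin_deriv ?Y (fst (root s)) (snd (root s))" for s
  have bad_child: "\<exists>i<length (subs s). \<not> (rule s = BoxR \<and> i = 1) \<and> bad (subs s ! i)"
    if "bad s" for s
  proof (rule ccontr)
    assume no_bad_child: "\<not> ?thesis"
    have s: "inf_proof s" using that unfolding bad_def by blast
    then have step: "step_ok (root s) (rule s) (map root (subs s))"
      unfolding inf_proof_def by (auto elim: locally_correct.cases)
    have child_provable: "provable (root (subs s ! i))" if "i < length (subs s)" for i
      using inf_proof_subs[OF s that] unfolding provable_def by blast
    have child_fin_deriv: "fin_deriv ?Y (fst (root (subs s ! i))) (snd (root (subs s ! i)))"
      if "i < length (subs s)" and "\<not> (rule s = BoxR \<and> i = 1)" for i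
      using inf_proof_subs[OF s that(1)] no_bad_child that unfolding bad_def by blast
    have "fin_deriv ?Y (fst (root s)) (snd (root s))"
      by (rule fin_deriv_of_step_ok[OF step]) (use child_provable child_fin_deriv in auto)
    then show False using that unfolding bad_def by blast
  qed
  assume "\<not> fin_deriv ?Y (fst (root t)) (snd (root t))"
  then have "bad t" using assms unfolding bad_def by blast
  then obtain f d where "is_branch t f d" and "\<forall>k. \<not> (rule (f k) = BoxR \<and> d k = 1)"
    using exists_branch_within[OF _ bad_child] by blast
  then show False using assms unfolding inf_proof_def by blast
qed

lemma provable_imp_coprovable: "provable (G, D) \<Longrightarrow> coprovable G D"
proof (rule coprovable.coinduct[of "\<lambda>G D. provable (G, D)"])
  fix G' D' assume "provable (G', D')"
  then obtain t where t: "inf_proof t" "root t = (G', D')" unfolding provable_def by blast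
  have "fin_deriv (\<lambda>G D. provable (G, D)) G' D'"
    using fin_deriv_of_inf_proof[OF t(1)] t(2) by simp
  then have "fin_deriv (\<lambda>G D. provable (G, D) \<or> coprovable G D) G' D'"
    by (rule fin_deriv_mono) blast
  then show "\<exists>G D. G' = G \<and> D' = D \<and> fin_deriv (\<lambda>G D. provable (G, D) \<or> coprovable G D) G D"
    by blast
qed

text \<open>For the converse an \<open>\<infinity>\<close>-proof is built corecursively from finite derivations ranked by
  height. The rank drops along every premise except the right premise of \<open>(\<Box>)\<close>, where a new
  derivation of arbitrary height starts; hence every infinite branch passes infinitely often through
  right premises of \<open>(\<Box>)\<close>.\<close>

inductive fin_deriv_ht ::
  "(fm multiset \<Rightarrow> fm multiset \<Rightarrow> bool) \<Rightarrow> nat \<Rightarrow> fm multiset \<Rightarrow> fm multiset \<Rightarrow> bool"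
  for X where
  ht_ax_at: "fin_deriv_ht X n (add_mset (At p) G) (add_mset (At p) D)"
| ht_ax_bot: "fin_deriv_ht X n (add_mset Bot G) D"
| ht_imp_L: "fin_deriv_ht X m1 (add_mset B G) D \<Longrightarrow> m1 < n \<Longrightarrow> fin_deriv_ht X m2 G (add_mset A D)
    \<Longrightarrow> m2 < n \<Longrightarrow> fin_deriv_ht X n (add_mset (Imp A B) G) D"
| ht_imp_R: "fin_deriv_ht X m (add_mset A G) (add_mset B D) \<Longrightarrow> m < n
    \<Longrightarrow> fin_deriv_ht X n G (add_mset (Imp A B) D)"
| ht_refl_L: "fin_deriv_ht X m (add_mset B (add_mset (Box B) G)) D \<Longrightarrow> m < n
    \<Longrightarrow> fin_deriv_ht X n (add_mset (Box B) G) D"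
| ht_box_R: "fin_deriv_ht X m (G + image_mset Box P) (add_mset A D) \<Longrightarrow> m < n
    \<Longrightarrow> X (image_mset Box P) {#A#}
    \<Longrightarrow> fin_deriv_ht X n (G + image_mset Box P) (add_mset (Box A) D)"

lemma fin_deriv_ht_exists: "fin_deriv X G D \<Longrightarrow> \<exists>n. fin_deriv_ht X n G D"
proof (induction rule: fin_deriv.induct)
  case (imp_L B G D A)
  then obtain m1 m2 where m1: "fin_deriv_ht X m1 (add_mset B G) D"
    and m2: "fin_deriv_ht X m2 G (add_mset A D)"
    by blast
  have "fin_deriv_ht X (Suc (max m1 m2)) (add_mset (Imp A B) G) D"
    by (rule ht_imp_L[OF m1 _ m2]) auto
  then show ?case by blast
next
  case (imp_R A G B D)
  then obtain m where "fin_deriv_ht X m (add_mset A G) (add_mset B D)" by blast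
  then have "fin_deriv_ht X (Suc m) G (add_mset (Imp A B) D)" by (rule ht_imp_R) auto
  then show ?case by blast
next
  case (refl_L B G D)
  then obtain m where "fin_deriv_ht X m (add_mset B (add_mset (Box B) G)) D" by blast
  then have "fin_deriv_ht X (Suc m) (add_mset (Box B) G) D" by (rule ht_refl_L) auto
  then show ?case by blast
next
  case (box_R G P A D)
  then obtain m where "fin_deriv_ht X m (G + image_mset Box P) (add_mset A D)" by blast
  then have "fin_deriv_ht X (Suc m) (G + image_mset Box P) (add_mset (Box A) D)"
    using box_R.hyps(2) by (rule ht_box_R[OF _ lessI])
  then show ?case by blast
qed (blast intro: ht_ax_at ht_ax_bot)+

definition ranked :: "sequent \<times> nat \<Rightarrow> bool" where
  "ranked x \<longleftrightarrow> fin_deriv_ht coprovable (snd x) (fst (fst x)) (snd (fst x))"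

definition ranked_step :: "sequent \<times> nat \<Rightarrow> rl \<Rightarrow> (sequent \<times> nat) list \<Rightarrow> bool" where
  "ranked_step x r ps \<longleftrightarrow> step_ok (fst x) r (map fst ps) \<and>
     (\<forall>i<length ps. ranked (ps!i) \<and> (\<not> (r = BoxR \<and> i = 1) \<longrightarrow> snd (ps!i) < snd x))"

lemma step_ok_Ax_At: "step_ok (add_mset (At p) G, add_mset (At p) D) Ax []"
  by (simp only: step_ok.simps) blast

lemma step_ok_Ax_Bot: "step_ok (add_mset Bot G, D) Ax []"
  by (simp only: step_ok.simps) blast

lemma step_ok_ImpL: "step_ok (add_mset (Imp A B) G, D) ImpL [(add_mset B G, D), (G, add_mset A D)]"
  by (simp only: step_ok.simps) blast

lemma step_ok_ImpR: "step_ok (G, add_mset (Imp A B) D) ImpR [(add_mset A G, add_mset B D)]"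
  by (simp only: step_ok.simps) blast

lemma step_ok_Refl: "step_ok (add_mset (Box B) G, D) Refl [(add_mset B (add_mset (Box B) G), D)]"
  by (simp only: step_ok.simps) blast

lemma step_ok_BoxR:
  "step_ok (G + image_mset Box P, add_mset (Box A) D) BoxR
     [(G + image_mset Box P, add_mset A D), (image_mset Box P, {#A#})]"
  by (simp only: step_ok.simps) blast

lemma ranked_step_exists:
  assumes "ranked ((G, D), n)"
  shows "\<exists>r ps. ranked_step ((G, D), n) r ps"
  using assms unfolding ranked_def fst_conv snd_conv
proof cases
  case (ht_ax_at p G' D')
  with step_ok_Ax_At[of p G' D'] show ?thesis
    unfolding ranked_step_def by (intro exI[of _ Ax] exI[of _ "[]"]) (simp del: step_ok.simps)
next
  case (ht_ax_bot G')
  with step_ok_Ax_Bot[of G' D] show ?thesis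
    unfolding ranked_step_def by (intro exI[of _ Ax] exI[of _ "[]"]) (simp del: step_ok.simps)
next
  case (ht_imp_L m1 B G' m2 A)
  with step_ok_ImpL[of A B G' D] show ?thesis
    unfolding ranked_step_def
    by (intro exI[of _ ImpL] exI[of _ "[((add_mset B G', D), m1), ((G', add_mset A D), m2)]"])
      (auto simp: ranked_def less_Suc_eq simp del: step_ok.simps)
next
  case (ht_imp_R m A B D')
  with step_ok_ImpR[of G A B D'] show ?thesis
    unfolding ranked_step_def
    by (intro exI[of _ ImpR] exI[of _ "[((add_mset A G, add_mset B D'), m)]"])
      (auto simp: ranked_def simp del: step_ok.simps)
next
  case (ht_refl_L m B G')
  with step_ok_Refl[of B G' D] show ?thesis
    unfolding ranked_step_def
    by (intro exI[of _ Refl] exI[of _ "[((add_mset B (add_mset (Box B) G'), D), m)]"])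
      (auto simp: ranked_def simp del: step_ok.simps)
next
  case (ht_box_R m G' P A D')
  obtain k where "fin_deriv_ht coprovable k (image_mset Box P) {#A#}"
    using ht_box_R(5) coprovable_iff fin_deriv_ht_exists by blast
  with ht_box_R step_ok_BoxR[of G' P A D'] show ?thesis
    unfolding ranked_step_def
    by (intro exI[of _ BoxR]
        exI[of _ "[((G' + image_mset Box P, add_mset A D'), m), ((image_mset Box P, {#A#}), k)]"])
      (auto simp: ranked_def less_Suc_eq simp del: step_ok.simps)
qed

definition choose_step :: "sequent \<times> nat \<Rightarrow> rl \<times> (sequent \<times> nat) list" where
  "choose_step x = (SOME p. ranked_step x (fst p) (snd p))"

lemma choose_step_ok: "ranked x \<Longrightarrow> ranked_step x (fst (choose_step x)) (snd (choose_step x))"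
proof -
  assume "ranked x"
  moreover obtain G D n where "x = ((G, D), n)" by (metis prod.collapse)
  ultimately obtain r ps where "ranked_step x r ps" using ranked_step_exists by blast
  then have "\<exists>p. ranked_step x (fst p) (snd p)" by (intro exI[of _ "(r, ps)"]) simp
  then show ?thesis unfolding choose_step_def by (rule someI_ex)
qed

primcorec tree_of :: "sequent \<times> nat \<Rightarrow> ptree" where
  "tree_of x = PNode (fst x) (fst (choose_step x)) (map tree_of (snd (choose_step x)))"

lemma locally_correct_tree_of:
  assumes "ranked x"
  shows "locally_correct (tree_of x)"
  using assms
proof (coinduction arbitrary: x rule: locally_correct.coinduct)
  case (locally_correct x)
  have step: "ranked_step x (fst (choose_step x)) (snd (choose_step x))"
    using choose_step_ok[OF locally_correct] .
  have "root \<circ> tree_of = fst" by (rule ext) simp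
  moreover have "step_ok (fst x) (fst (choose_step x)) (map fst (snd (choose_step x)))"
    using step unfolding ranked_step_def by blast
  moreover have "\<forall>s\<in>set (subs (tree_of x)). (\<exists>y. s = tree_of y \<and> ranked y) \<or> locally_correct s"
  proof
    fix s assume "s \<in> set (subs (tree_of x))"
    then obtain i where i: "i < length (snd (choose_step x))" "s = tree_of (snd (choose_step x) ! i)"
      by (auto simp: in_set_conv_nth)
    then have "ranked (snd (choose_step x) ! i)" using step unfolding ranked_step_def by blast
    then show "(\<exists>y. s = tree_of y \<and> ranked y) \<or> locally_correct s" using i by blast
  qed
  ultimately show ?case by simp
qed

lemma tree_of_branch_ranked:
  assumes "ranked x" and "is_branch (tree_of x) f d"
  obtains g where "\<And>i. f i = tree_of (g i)" and "\<And>i. ranked (g i)"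
    and "\<And>i. d i < length (snd (choose_step (g i)))"
    and "\<And>i. g (Suc i) = snd (choose_step (g i)) ! d i"
proof -
  define g where "g = rec_nat x (\<lambda>i y. snd (choose_step y) ! d i)"
  have g_Suc: "g (Suc i) = snd (choose_step (g i)) ! d i" for i unfolding g_def by simp
  have len: "d i < length (snd (choose_step (g i)))" if "f i = tree_of (g i)" for i
  proof -
    have "d i < length (subs (f i))" using assms(2) unfolding is_branch_def by blast
    then show ?thesis using that by simp
  qed
  have fg: "f i = tree_of (g i) \<and> ranked (g i)" for i
  proof (induction i)
    case 0 then show ?case using assms unfolding is_branch_def g_def by simp
  next
    case (Suc i)
    then have fi: "f i = tree_of (g i)" and gi: "ranked (g i)" by auto
    have "f (Suc i) = subs (f i) ! d i" using assms(2) unfolding is_branch_def by blast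
    then have "f (Suc i) = tree_of (g (Suc i))" using fi len[OF fi] g_Suc by simp
    moreover have "ranked (g (Suc i))"
      using choose_step_ok[OF gi] len[OF fi] g_Suc unfolding ranked_step_def by simp
    ultimately show ?case by blast
  qed
  show ?thesis by (rule that) (use fg len g_Suc in auto)
qed

lemma ex_not_decreasing_from:
  fixes h :: "nat \<Rightarrow> nat"
  shows "\<exists>i\<ge>n. h i \<le> h (Suc i)"
proof (rule ccontr)
  assume "\<not> ?thesis"
  then have decreasing: "h (Suc i) < h i" if "i \<ge> n" for i using that by (meson not_le)
  have "h (n + k) + k \<le> h n" for k
  proof (induction k)
    case (Suc k)
    have "h (Suc (n + k)) < h (n + k)" by (rule decreasing) simp
    with Suc show ?case by simp
  qed simp
  from this[of "Suc (h n)"] show False by simp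
qed

lemma tree_of_branch:
  assumes "ranked x" and "is_branch (tree_of x) f d"
  shows "\<exists>i\<ge>n. rule (f i) = BoxR \<and> d i = 1"
proof -
  obtain g where f: "\<And>i. f i = tree_of (g i)" and ranked: "\<And>i. ranked (g i)"
    and len: "\<And>i. d i < length (snd (choose_step (g i)))"
    and g_Suc: "\<And>i. g (Suc i) = snd (choose_step (g i)) ! d i"
    using tree_of_branch_ranked[OF assms] by blast
  obtain i where i: "i \<ge> n" "snd (g i) \<le> snd (g (Suc i))"
    using ex_not_decreasing_from[of n "\<lambda>i. snd (g i)"] by blast
  have "ranked_step (g i) (rule (f i)) (snd (choose_step (g i)))"
    using choose_step_ok[OF ranked] f by simp
  then have "\<not> (rule (f i) = BoxR \<and> d i = 1) \<longrightarrow> snd (g (Suc i)) < snd (g i)"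
    using len[of i] unfolding ranked_step_def g_Suc by blast
  then have "rule (f i) = BoxR \<and> d i = 1" using i(2) by auto
  with i(1) show ?thesis by blast
qed

lemma coprovable_imp_provable: "coprovable G D \<Longrightarrow> provable (G, D)"
proof -
  assume "coprovable G D"
  then obtain n where "fin_deriv_ht coprovable n G D"
    using coprovable_iff fin_deriv_ht_exists by blast
  then have ranked: "ranked ((G, D), n)" unfolding ranked_def by simp
  have "inf_proof (tree_of ((G, D), n))"
    unfolding inf_proof_def using locally_correct_tree_of[OF ranked] tree_of_branch[OF ranked] by blast
  moreover have "root (tree_of ((G, D), n)) = (G, D)" by simp
  ultimately show ?thesis unfolding provable_def by blast
qed

lemma provable_iff_coprovable: "provable (G, D) \<longleftrightarrow> coprovable G D"
  using provable_imp_coprovable coprovable_imp_provable by blast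

subsection \<open>Invertibility\<close>

lemma fin_deriv_ax_atI: "At p \<in># G \<Longrightarrow> At p \<in># D \<Longrightarrow> fin_deriv X G D"
  by (metis insert_DiffM ax_at)

lemma fin_deriv_ax_botI: "Bot \<in># G \<Longrightarrow> fin_deriv X G D"
  by (metis insert_DiffM ax_bot)

lemma fin_deriv_imp_LI:
  "Imp A B \<in># G \<Longrightarrow> fin_deriv X (add_mset B (G - {#Imp A B#})) D
    \<Longrightarrow> fin_deriv X (G - {#Imp A B#}) (add_mset A D) \<Longrightarrow> fin_deriv X G D"
  by (metis insert_DiffM imp_L)

lemma fin_deriv_imp_RI:
  "Imp A B \<in># D \<Longrightarrow> fin_deriv X (add_mset A G) (add_mset B (D - {#Imp A B#})) \<Longrightarrow> fin_deriv X G D"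
  by (metis insert_DiffM imp_R)

lemma fin_deriv_refl_LI: "Box B \<in># G \<Longrightarrow> fin_deriv X (add_mset B G) D \<Longrightarrow> fin_deriv X G D"
  by (metis insert_DiffM refl_L)

lemma fin_deriv_box_RI:
  "Box A \<in># D \<Longrightarrow> image_mset Box P \<subseteq># G \<Longrightarrow> fin_deriv X G (add_mset A (D - {#Box A#}))
    \<Longrightarrow> X (image_mset Box P) {#A#} \<Longrightarrow> fin_deriv X G D"
  by (metis insert_DiffM subset_mset.diff_add box_R)

lemma fin_deriv_imp_L_inv1:
  "fin_deriv X G D \<Longrightarrow> Imp b c \<in># G \<Longrightarrow> fin_deriv X (add_mset c (G - {#Imp b c#})) D"
proof (induction rule: fin_deriv.induct)
  case (ax_at p G D) then show ?case by (intro fin_deriv_ax_atI[of p]) auto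
next
  case (ax_bot G D) then show ?case by (intro fin_deriv_ax_botI) auto
next
  case (imp_L B G D A)
  show ?case
  proof (cases "Imp A B = Imp b c")
    case True then show ?thesis using imp_L by auto
  next
    case False
    then obtain G' where G: "G = add_mset (Imp b c) G'"
      using imp_L.prems by (auto dest: multi_member_split)
    have "fin_deriv X (add_mset B (add_mset c G')) D"
      using imp_L.IH(1) G by (simp add: add_mset_commute)
    moreover have "fin_deriv X (add_mset c G') (add_mset A D)"
      using imp_L.IH(2) G by simp
    ultimately have "fin_deriv X (add_mset (Imp A B) (add_mset c G')) D"
      by (rule fin_deriv.imp_L)
    then show ?thesis using G by (simp add: add_mset_commute)
  qed
next
  case (imp_R A G B D)
  then have m: "Imp b c \<in># G" by simp
  have i: "fin_deriv X (add_mset c (add_mset A (G - {#Imp b c#}))) (add_mset B D)"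
    using imp_R.IH m by simp
  show ?case by (rule fin_deriv_imp_RI[of A B])
    (use i in \<open>simp_all, metis add_mset_commute\<close>)
next
  case (refl_L B G D)
  then have m: "Imp b c \<in># G" by simp
  have i: "fin_deriv X (add_mset c (add_mset B (add_mset (Box B) (G - {#Imp b c#})))) D"
    using refl_L.IH m by simp
  show ?case by (rule fin_deriv_refl_LI[of B])
    (use i m in \<open>simp_all, metis add_mset_commute\<close>)
next
  case (box_R G P A D)
  then have m: "Imp b c \<in># G" by auto
  have e: "G + image_mset Box P - {#Imp b c#} = (G - {#Imp b c#}) + image_mset Box P"
    using m by (simp add: multiset_diff_union_assoc)
  show ?case by (rule fin_deriv_box_RI[of A _ P])
    (use box_R m in \<open>simp_all add: e subset_mset.le_iff_add\<close>)
qed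

lemma fin_deriv_imp_L_inv2:
  "fin_deriv X G D \<Longrightarrow> Imp b c \<in># G \<Longrightarrow> fin_deriv X (G - {#Imp b c#}) (add_mset b D)"
proof (induction rule: fin_deriv.induct)
  case (ax_at p G D) then show ?case by (intro fin_deriv_ax_atI[of p]) auto
next
  case (ax_bot G D) then show ?case by (intro fin_deriv_ax_botI) auto
next
  case (imp_L B G D A)
  show ?case
  proof (cases "Imp A B = Imp b c")
    case True then show ?thesis using imp_L by auto
  next
    case False
    then have m: "Imp b c \<in># G" using imp_L by auto
    have i1: "fin_deriv X (add_mset B (G - {#Imp b c#})) (add_mset b D)" using imp_L.IH(1) m by simp
    have i2: "fin_deriv X (G - {#Imp b c#}) (add_mset b (add_mset A D))" using imp_L.IH(2) m by simp
    show ?thesis by (rule fin_deriv_imp_LI[of A B])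
      (use i1 i2 m in \<open>simp_all add: add_mset_commute\<close>)
  qed
next
  case (imp_R A G B D)
  then have m: "Imp b c \<in># G" by simp
  have i: "fin_deriv X (add_mset A (G - {#Imp b c#})) (add_mset b (add_mset B D))"
    using imp_R.IH m by simp
  show ?case by (rule fin_deriv_imp_RI[of A B])
    (use i in \<open>simp_all add: add_mset_commute\<close>)
next
  case (refl_L B G D)
  then have m: "Imp b c \<in># G" by simp
  have i: "fin_deriv X (add_mset B (add_mset (Box B) (G - {#Imp b c#}))) (add_mset b D)"
    using refl_L.IH m by simp
  show ?case by (rule fin_deriv_refl_LI[of B])
    (use i m in \<open>simp_all add: add_mset_commute\<close>)
next
  case (box_R G P A D)
  then have m: "Imp b c \<in># G" by auto
  have e: "G + image_mset Box P - {#Imp b c#} = (G - {#Imp b c#}) + image_mset Box P"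
    using m by (simp add: multiset_diff_union_assoc)
  have m2: "Imp b c \<in># G + image_mset Box P" using m by simp
  have i: "fin_deriv X ((G - {#Imp b c#}) + image_mset Box P) (add_mset b (add_mset A D))"
    using box_R.IH[OF m2] unfolding e .
  show ?case by (rule fin_deriv_box_RI[of A _ P])
    (use box_R(2) i in \<open>simp_all add: e add_mset_commute\<close>)
qed

lemma fin_deriv_imp_R_inv:
  "fin_deriv X G D \<Longrightarrow> Imp b c \<in># D
    \<Longrightarrow> fin_deriv X (add_mset b G) (add_mset c (D - {#Imp b c#}))"
proof (induction rule: fin_deriv.induct)
  case (ax_at p G D) then show ?case by (intro fin_deriv_ax_atI[of p]) auto
next
  case (ax_bot G D) then show ?case by (intro fin_deriv_ax_botI) auto
next
  case (imp_L B G D A)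
  have i1: "fin_deriv X (add_mset b (add_mset B G)) (add_mset c (D - {#Imp b c#}))" using imp_L by simp
  have i2: "fin_deriv X (add_mset b G) (add_mset c (add_mset A (D - {#Imp b c#})))" using imp_L by simp
  show ?case by (rule fin_deriv_imp_LI[of A B])
    (use i1 i2 in \<open>simp_all add: add_mset_commute\<close>)
next
  case (imp_R A G B D)
  show ?case
  proof (cases "Imp A B = Imp b c")
    case True then show ?thesis using imp_R by auto
  next
    case False
    then have m: "Imp b c \<in># D" using imp_R by auto
    have i: "fin_deriv X (add_mset b (add_mset A G)) (add_mset c (add_mset B (D - {#Imp b c#})))"
      using imp_R.IH m by simp
    show ?thesis by (rule fin_deriv_imp_RI[of A B])
      (use i m False in \<open>simp_all add: add_mset_commute\<close>)
  qed
next
  case (refl_L B G D)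
  have i: "fin_deriv X (add_mset b (add_mset B (add_mset (Box B) G))) (add_mset c (D - {#Imp b c#}))"
    using refl_L by simp
  show ?case by (rule fin_deriv_refl_LI[of B])
    (use i in \<open>simp_all add: add_mset_commute\<close>)
next
  case (box_R G P A D)
  then have m: "Imp b c \<in># D" by auto
  have i: "fin_deriv X (add_mset b (G + image_mset Box P)) (add_mset c (add_mset A (D - {#Imp b c#})))"
    using box_R.IH m by simp
  show ?case by (rule fin_deriv_box_RI[of A _ P])
    (use box_R(2) i m in \<open>simp_all add: add_mset_commute subset_mset.le_iff_add\<close>)
qed

lemma fin_deriv_box_R_inv:
  "fin_deriv X G D \<Longrightarrow> Box a \<in># D \<Longrightarrow> fin_deriv X G (add_mset a (D - {#Box a#}))"
proof (induction rule: fin_deriv.induct)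
  case (ax_at p G D) then show ?case by (intro fin_deriv_ax_atI[of p]) auto
next
  case (ax_bot G D) then show ?case by (intro fin_deriv_ax_botI) auto
next
  case (imp_L B G D A)
  have i1: "fin_deriv X (add_mset B G) (add_mset a (D - {#Box a#}))" using imp_L by simp
  have i2: "fin_deriv X G (add_mset a (add_mset A (D - {#Box a#})))" using imp_L by simp
  show ?case by (rule fin_deriv_imp_LI[of A B])
    (use i1 i2 in \<open>simp_all add: add_mset_commute\<close>)
next
  case (imp_R A G B D)
  then have m: "Box a \<in># D" by auto
  have i: "fin_deriv X (add_mset A G) (add_mset a (add_mset B (D - {#Box a#})))"
    using imp_R.IH m by simp
  show ?case by (rule fin_deriv_imp_RI[of A B])
    (use i m in \<open>simp_all add: add_mset_commute\<close>)
next
  case (refl_L B G D)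
  then show ?case by (intro fin_deriv.refl_L) simp
next
  case (box_R G P A D)
  show ?case
  proof (cases "A = a")
    case True then show ?thesis using box_R by auto
  next
    case False
    then have m: "Box a \<in># D" using box_R by auto
    have i: "fin_deriv X (G + image_mset Box P) (add_mset a (add_mset A (D - {#Box a#})))"
      using box_R.IH m by simp
    show ?thesis by (rule fin_deriv_box_RI[of A _ P])
      (use box_R(2) i m False in \<open>simp_all add: add_mset_commute\<close>)
  qed
qed

subsection \<open>Contraction\<close>

definition left_contractible :: "fm \<Rightarrow> bool" where
  "left_contractible A \<longleftrightarrow>
    (\<forall>G D. coprovable (add_mset A (add_mset A G)) D \<longrightarrow> coprovable (add_mset A G) D)"

definition right_contractible :: "fm \<Rightarrow> bool" where
  "right_contractible A \<longleftrightarrow>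
    (\<forall>G D. coprovable G (add_mset A (add_mset A D)) \<longrightarrow> coprovable G (add_mset A D))"

text \<open>The sequents awaiting a left contraction. They arise as right premises of \<open>(\<Box>)\<close> when the
  duplicated formula lies in the boxed context \<open>\<Box>\<Pi>\<close>.\<close>

definition left_contracted :: "fm \<Rightarrow> fm multiset \<Rightarrow> fm multiset \<Rightarrow> bool" where
  "left_contracted F G D \<longleftrightarrow> (\<exists>G1. coprovable G1 D \<and> 2 \<le> count G1 F \<and> G = G1 - {#F#})"

lemma count_ge_2_in: "2 \<le> count M x \<Longrightarrow> x \<in># M"
  using count_greater_zero_iff[of M x] by linarith

lemma count_ge_2_add_mset: "2 \<le> count M x \<Longrightarrow> 2 \<le> count (add_mset y M) x"
proof -
  have "count M x \<le> count (add_mset y M) x" by simp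
  then show "2 \<le> count M x \<Longrightarrow> 2 \<le> count (add_mset y M) x" by linarith
qed

lemma count_ge_2_add_mset_same: "2 \<le> count (add_mset x M) x \<Longrightarrow> x \<in># M"
  using count_greater_zero_iff[of M x] by (simp del: count_greater_zero_iff)

lemma fin_deriv_contract_imp_R:
  assumes "left_contractible A" "right_contractible B"
    and "fin_deriv coprovable (add_mset A G) (add_mset B (add_mset (Imp A B) D))"
  shows "fin_deriv coprovable G (add_mset (Imp A B) D)"
proof -
  have "fin_deriv coprovable (add_mset A (add_mset A G)) (add_mset B (add_mset B D))"
    using fin_deriv_imp_R_inv[OF assms(3), of A B] by (simp add: add_mset_commute)
  then have "coprovable (add_mset A G) (add_mset B (add_mset B D))"
    using assms(1) coprovable_iff unfolding left_contractible_def by blast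
  then have "coprovable (add_mset A G) (add_mset B D)"
    using assms(2) unfolding right_contractible_def by blast
  then show ?thesis using coprovable_iff fin_deriv.imp_R by blast
qed

lemma fin_deriv_contract_imp_L:
  assumes "right_contractible A" "left_contractible B"
    and "fin_deriv coprovable (add_mset B (add_mset (Imp A B) G)) D"
    and "fin_deriv coprovable (add_mset (Imp A B) G) (add_mset A D)"
  shows "fin_deriv coprovable (add_mset (Imp A B) G) D"
proof -
  have "fin_deriv coprovable (add_mset B (add_mset B G)) D"
    using fin_deriv_imp_L_inv1[OF assms(3), of A B] by simp
  then have left: "coprovable (add_mset B G) D"
    using assms(2) coprovable_iff unfolding left_contractible_def by blast
  have "fin_deriv coprovable G (add_mset A (add_mset A D))"
    using fin_deriv_imp_L_inv2[OF assms(4), of A B] by simp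
  then have right: "coprovable G (add_mset A D)"
    using assms(1) coprovable_iff unfolding right_contractible_def by blast
  from left right show ?thesis using coprovable_iff fin_deriv.imp_L by blast
qed

lemma fin_deriv_contract_box_R:
  assumes "right_contractible A"
    and "fin_deriv coprovable (G + image_mset Box P) (add_mset A (add_mset (Box A) D))"
    and "coprovable (image_mset Box P) {#A#}"
  shows "fin_deriv coprovable (G + image_mset Box P) (add_mset (Box A) D)"
proof -
  have "fin_deriv coprovable (G + image_mset Box P) (add_mset A (add_mset A D))"
    using fin_deriv_box_R_inv[OF assms(2), of A] by (simp add: add_mset_commute)
  then have "coprovable (G + image_mset Box P) (add_mset A D)"
    using assms(1) coprovable_iff unfolding right_contractible_def by blast
  then show ?thesis using assms(3) coprovable_iff fin_deriv.box_R by blast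
qed

lemma fin_deriv_contract_right:
  assumes imp: "\<And>B C. F = Imp B C \<Longrightarrow> left_contractible B \<and> right_contractible C"
    and box: "\<And>C. F = Box C \<Longrightarrow> right_contractible C"
  shows "fin_deriv coprovable G D \<Longrightarrow> 2 \<le> count D F \<Longrightarrow> fin_deriv coprovable G (D - {#F#})"
proof (induction rule: fin_deriv.induct)
  case (ax_at p G D) then show ?case by (intro fin_deriv_ax_atI[of p]) (auto simp: in_diff_count)
next
  case (ax_bot G D) then show ?case by (intro fin_deriv_ax_botI) auto
next
  case (imp_L B G D A)
  then have m: "F \<in># D" by (intro count_ge_2_in) simp
  have c2: "2 \<le> count (add_mset A D) F" using imp_L.prems by (rule count_ge_2_add_mset)
  have i2: "fin_deriv coprovable G (add_mset A (D - {#F#}))" using imp_L.IH(2)[OF c2] diff_union_swap2[OF m] by simp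
  have i1: "fin_deriv coprovable (add_mset B G) (D - {#F#})" using imp_L.IH(1) imp_L.prems by simp
  show ?case using i1 i2 by (rule fin_deriv.imp_L)
next
  case (imp_R A G B D)
  show ?case
  proof (cases "F = Imp A B")
    case True
    then have "2 \<le> count (add_mset (Imp A B) D) (Imp A B)" using imp_R.prems by simp
    then obtain D' where D': "D = add_mset (Imp A B) D'"
      by (metis count_ge_2_add_mset_same insert_DiffM)
    have "fin_deriv coprovable (add_mset A G) (add_mset B (add_mset (Imp A B) D'))"
      using imp_R.hyps D' by simp
    with imp[OF True] have "fin_deriv coprovable G (add_mset (Imp A B) D')"
      by (blast intro: fin_deriv_contract_imp_R)
    then show ?thesis using True D' by simp
  next
    case False
    then have m: "F \<in># D" using imp_R.prems by (intro count_ge_2_in) simp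
    have c2: "2 \<le> count (add_mset B D) F" using imp_R.prems False by (intro count_ge_2_add_mset) simp
    have "fin_deriv coprovable (add_mset A G) (add_mset B (D - {#F#}))"
      using imp_R.IH[OF c2] diff_union_swap2[OF m] by simp
    then have "fin_deriv coprovable G (add_mset (Imp A B) (D - {#F#}))" by (rule fin_deriv.imp_R)
    then show ?thesis using False m by simp
  qed
next
  case (refl_L B G D)
  have "fin_deriv coprovable (add_mset B (add_mset (Box B) G)) (D - {#F#})" using refl_L.IH refl_L.prems by simp
  then show ?case by (rule fin_deriv.refl_L)
next
  case (box_R G P A D)
  show ?case
  proof (cases "F = Box A")
    case True
    then have "2 \<le> count (add_mset (Box A) D) (Box A)" using box_R.prems by simp
    then obtain D' where D': "D = add_mset (Box A) D'"
      by (metis count_ge_2_add_mset_same insert_DiffM)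
    have "fin_deriv coprovable (G + image_mset Box P) (add_mset A (add_mset (Box A) D'))"
      using box_R.hyps(1) D' by simp
    with box[OF True] box_R.hyps(2)
    have "fin_deriv coprovable (G + image_mset Box P) (add_mset (Box A) D')"
      by (blast intro: fin_deriv_contract_box_R)
    then show ?thesis using True D' by simp
  next
    case False
    then have m: "F \<in># D" using box_R.prems by (intro count_ge_2_in) simp
    have c2: "2 \<le> count (add_mset A D) F" using box_R.prems False by (intro count_ge_2_add_mset) simp
    have "fin_deriv coprovable (G + image_mset Box P) (add_mset A (D - {#F#}))"
      using box_R.IH[OF c2] diff_union_swap2[OF m] by simp
    then have "fin_deriv coprovable (G + image_mset Box P) (add_mset (Box A) (D - {#F#}))"
      using box_R.hyps(2) by (rule fin_deriv.box_R)
    then show ?thesis using False m by simp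
  qed
qed

lemma left_contracted_boxed_context:
  assumes "coprovable (image_mset Box P) {#A#}" and "2 \<le> count (G + image_mset Box P) F"
    and "F \<notin># G"
  shows "\<exists>P'. G + image_mset Box P - {#F#} = G + image_mset Box P'
    \<and> left_contracted F (image_mset Box P') {#A#}"
proof -
  have count: "2 \<le> count (image_mset Box P) F" using assms(2,3) by (simp add: not_in_iff)
  then have F: "F \<in># image_mset Box P" by (rule count_ge_2_in)
  then obtain c where "c \<in># P" "F = Box c" by (metis imageE set_image_mset)
  then have P: "image_mset Box (P - {#c#}) = image_mset Box P - {#F#}"
    by (simp add: image_mset_Diff)
  have "G + image_mset Box P - {#F#} = G + image_mset Box (P - {#c#})"
    unfolding P using F by (intro multiset_diff_union_assoc) (simp only: single_subset_iff)
  moreover have "left_contracted F (image_mset Box (P - {#c#})) {#A#}"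
    unfolding left_contracted_def using assms(1) count P by blast
  ultimately show ?thesis by blast
qed

lemma fin_deriv_contract_left:
  assumes imp: "\<And>B C. F = Imp B C \<Longrightarrow> left_contractible C \<and> right_contractible B"
  shows "fin_deriv coprovable G D \<Longrightarrow> 2 \<le> count G F \<Longrightarrow>
    fin_deriv (\<lambda>G D. left_contracted F G D \<or> coprovable G D) (G - {#F#}) D"
    (is "_ \<Longrightarrow> _ \<Longrightarrow> fin_deriv ?Y _ _")
proof (induction rule: fin_deriv.induct)
  case (ax_at p G D) then show ?case by (intro fin_deriv_ax_atI[of p]) (auto simp: in_diff_count)
next
  case (ax_bot G D) then show ?case by (intro fin_deriv_ax_botI) (auto simp: in_diff_count)
next
  case (imp_L B G D A)
  show ?case
  proof (cases "F = Imp A B")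
    case True
    then have "2 \<le> count (add_mset (Imp A B) G) (Imp A B)" using imp_L.prems by simp
    then obtain G' where G': "G = add_mset (Imp A B) G'"
      by (metis count_ge_2_add_mset_same insert_DiffM)
    have "fin_deriv coprovable (add_mset B (add_mset (Imp A B) G')) D"
      and "fin_deriv coprovable (add_mset (Imp A B) G') (add_mset A D)"
      using imp_L.hyps G' by simp_all
    with imp[OF True] have "fin_deriv coprovable (add_mset (Imp A B) G') D"
      by (blast intro: fin_deriv_contract_imp_L)
    then have "fin_deriv ?Y (add_mset (Imp A B) G') D" by (rule fin_deriv_mono) (rule disjI2)
    then show ?thesis using True G' by simp
  next
    case False
    then have m: "F \<in># G" using imp_L.prems by (intro count_ge_2_in) simp
    have c2: "2 \<le> count G F" using imp_L.prems False by simp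
    have i1: "fin_deriv ?Y (add_mset B (G - {#F#})) D"
      using imp_L.IH(1)[OF count_ge_2_add_mset[OF c2]] unfolding diff_union_swap2[OF m] .
    have i2: "fin_deriv ?Y (G - {#F#}) (add_mset A D)" using imp_L.IH(2)[OF c2] .
    have "fin_deriv ?Y (add_mset (Imp A B) (G - {#F#})) D" using i1 i2 by (rule fin_deriv.imp_L)
    then show ?thesis unfolding diff_union_swap2[OF m] .
  qed
next
  case (imp_R A G B D)
  have m: "F \<in># G" using imp_R.prems by (rule count_ge_2_in)
  have "fin_deriv ?Y (add_mset A (G - {#F#})) (add_mset B D)"
    using imp_R.IH[OF count_ge_2_add_mset[OF imp_R.prems]] unfolding diff_union_swap2[OF m] .
  then show ?case by (rule fin_deriv.imp_R)
next
  case (refl_L B G D)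
  have c: "2 \<le> count (add_mset B (add_mset (Box B) G)) F" using refl_L.prems by (rule count_ge_2_add_mset)
  note ih = refl_L.IH[OF c]
  show ?case
  proof (cases "F = Box B")
    case True
    then have "2 \<le> count (add_mset (Box B) G) (Box B)" using refl_L.prems by simp
    then have m: "Box B \<in># G" by (rule count_ge_2_add_mset_same)
    have e1: "add_mset B (add_mset (Box B) G) - {#F#} = add_mset B G" using True by simp
    have e2: "add_mset (Box B) G - {#F#} = G" using True by simp
    have "fin_deriv ?Y (add_mset B G) D" using ih unfolding e1 .
    then have "fin_deriv ?Y G D" by (rule fin_deriv_refl_LI[of B, OF m])
    then show ?thesis unfolding e2 .
  next
    case False
    then have m: "F \<in># G" using refl_L.prems by (intro count_ge_2_in) simp
    have e: "add_mset B (add_mset (Box B) G) - {#F#} = add_mset B (add_mset (Box B) (G - {#F#}))"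
      using m by simp
    have "fin_deriv ?Y (add_mset (Box B) (G - {#F#})) D" using ih unfolding e by (rule fin_deriv.refl_L)
    then show ?thesis unfolding diff_union_swap2[OF m] .
  qed
next
  case (box_R G P A D)
  note ih = box_R.IH[OF box_R.prems]
  show ?case
  proof (cases "F \<in># G")
    case True
    have e: "G + image_mset Box P - {#F#} = (G - {#F#}) + image_mset Box P"
      using True by (simp add: multiset_diff_union_assoc)
    have r: "?Y (image_mset Box P) {#A#}" using box_R.hyps(2) by (rule disjI2)
    show ?thesis using fin_deriv.box_R[OF ih[unfolded e] r] unfolding e .
  next
    case False
    then obtain P' where e: "G + image_mset Box P - {#F#} = G + image_mset Box P'"
      and "left_contracted F (image_mset Box P') {#A#}"
      using left_contracted_boxed_context[OF box_R.hyps(2) box_R.prems] by blast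
    then show ?thesis using fin_deriv.box_R[OF ih[unfolded e]] unfolding e by blast
  qed
qed

lemma coprovable_contract_left:
  assumes imp: "\<And>B C. F = Imp B C \<Longrightarrow> left_contractible C \<and> right_contractible B"
    and "coprovable G D" and "2 \<le> count G F"
  shows "coprovable (G - {#F#}) D"
proof -
  have "left_contracted F (G - {#F#}) D" unfolding left_contracted_def using assms(2,3) by blast
  then show ?thesis
  proof (rule coprovable.coinduct[of "left_contracted F"])
    fix G' D' assume "left_contracted F G' D'"
    then obtain G1 where G1: "coprovable G1 D'" "2 \<le> count G1 F" "G' = G1 - {#F#}"
      unfolding left_contracted_def by blast
    from G1(1) have "fin_deriv coprovable G1 D'" using coprovable_iff by blast
    from fin_deriv_contract_left[OF imp this G1(2)]
    show "\<exists>G D. G' = G \<and> D' = D \<and> fin_deriv (\<lambda>G D. left_contracted F G D \<or> coprovable G D) G D"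
      unfolding G1(3) by blast
  qed
qed

lemma contractible_if_subformulas:
  assumes imp: "\<And>B C. F = Imp B C \<Longrightarrow>
      left_contractible B \<and> right_contractible B \<and> left_contractible C \<and> right_contractible C"
    and box: "\<And>C. F = Box C \<Longrightarrow> right_contractible C"
  shows "left_contractible F \<and> right_contractible F"
proof
  have imp_left: "\<And>B C. F = Imp B C \<Longrightarrow> left_contractible C \<and> right_contractible B"
    and imp_right: "\<And>B C. F = Imp B C \<Longrightarrow> left_contractible B \<and> right_contractible C"
    using imp by blast+
  show "left_contractible F" unfolding left_contractible_def
  proof (intro allI impI)
    fix G D assume "coprovable (add_mset F (add_mset F G)) D"
    from coprovable_contract_left[of F, OF imp_left this]
    show "coprovable (add_mset F G) D" by simp
  qed
  show "right_contractible F" unfolding right_contractible_def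
  proof (intro allI impI)
    fix G D assume "coprovable G (add_mset F (add_mset F D))"
    then have "fin_deriv coprovable G (add_mset F (add_mset F D))" using coprovable_iff by blast
    from fin_deriv_contract_right[of F, OF imp_right box this]
    show "coprovable G (add_mset F D)" using coprovable_iff by simp
  qed
qed

lemma contractible: "left_contractible F \<and> right_contractible F"
proof (induction F)
  case Bot show ?case by (rule contractible_if_subformulas) simp_all
next
  case (At x) show ?case by (rule contractible_if_subformulas) simp_all
next
  case (Imp F1 F2) show ?case by (rule contractible_if_subformulas) (use Imp.IH in auto)
next
  case (Box F) show ?case by (rule contractible_if_subformulas) (use Box.IH in auto)
qed

theorem lemma8p2:
  fixes A :: fm
  shows "(\<forall>\<Gamma> \<Delta>. provable (add_mset A (add_mset A \<Gamma>), \<Delta>) \<longrightarrow> provable (add_mset A \<Gamma>, \<Delta>))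
       \<and> (\<forall>\<Gamma> \<Delta>. provable (\<Gamma>, add_mset A (add_mset A \<Delta>)) \<longrightarrow> provable (\<Gamma>, add_mset A \<Delta>))"
  using contractible[of A]
  unfolding left_contractible_def right_contractible_def provable_iff_coprovable .

end
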